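(* Let $0<k<n$ and $d$ be integers. Then $C_{12}>0$ for every allowable critical data set $A_c=(\alpha_c,n_1,d_1,k_1,n_2,d_2,k_2)$ for type $(n,d,k)$ with $k_1\ge n_1$.
   Context: Write $d=na-t$ with integers $a,t$, $0\le t<n$, and $ka=l(n-k)+t+m$ with integers $l,m$, $0\le m<n-k$. A critical data set for type $(n,d,k)$ is a tuple $A_c=(\alpha_c,n_1,d_1,k_1,n_2,d_2,k_2)$ with integers $n_i\ge1$, $k_i\ge0$, $d_i$ such that $n_1+n_2=n$, $d_1+d_2=d$, $k_1+k_2=k$, $\frac{d_2}{n_2}>\frac{d_1}{n_1}$, $\frac{k_1}{n_1}>\frac{k_2}{n_2}$, and $\alpha_c=\frac{d_2n_1-d_1n_2}{n_2k_1-n_1k_2}$. It is allowable if moreover $\frac tk<\alpha_c<\frac{ln+t}{k}$, $d\ge\frac1k(n^2-1)-(n-k)$, $d_1\ge\frac1{k_1}(n_1^2-1)-(n_1-k_1)$, and either ($k_2=0$ and $n_2=1$) or ($k_2\ge1$ and $d_2\ge\frac1{k_2}(n_2^2-1)-(n_2-k_2)$). Define $C_{12}=-n_1n_2-d_2n_1+d_1n_2+k_1(d_2+n_2-k_2)$. *)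

theory Defs
  imports Complex_Main
begin

definition type_params :: "int \<Rightarrow> int \<Rightarrow> int \<Rightarrow> int \<Rightarrow> int \<Rightarrow> int \<Rightarrow> int \<Rightarrow> bool" where
  "type_params n d k a t l m \<longleftrightarrow>
     d = n * a - t \<and> 0 \<le> t \<and> t < n \<and>
     k * a = l * (n - k) + t + m \<and> 0 \<le> m \<and> m < n - k"

definition critical_data_set ::
  "int \<Rightarrow> int \<Rightarrow> int \<Rightarrow> real \<Rightarrow> int \<Rightarrow> int \<Rightarrow> int \<Rightarrow> int \<Rightarrow> int \<Rightarrow> int \<Rightarrow> bool" where
  "critical_data_set n d k \<alpha> n1 d1 k1 n2 d2 k2 \<longleftrightarrow>
     n1 \<ge> 1 \<and> n2 \<ge> 1 \<and> k1 \<ge> 0 \<and> k2 \<ge> 0 \<and>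
     n1 + n2 = n \<and> d1 + d2 = d \<and> k1 + k2 = k \<and>
     real_of_int d2 / real_of_int n2 > real_of_int d1 / real_of_int n1 \<and>
     real_of_int k1 / real_of_int n1 > real_of_int k2 / real_of_int n2 \<and>
     \<alpha> = real_of_int (d2 * n1 - d1 * n2) / real_of_int (n2 * k1 - n1 * k2)"

definition allowable ::
  "int \<Rightarrow> int \<Rightarrow> int \<Rightarrow> int \<Rightarrow> int \<Rightarrow>
   real \<Rightarrow> int \<Rightarrow> int \<Rightarrow> int \<Rightarrow> int \<Rightarrow> int \<Rightarrow> int \<Rightarrow> bool" where
  "allowable n d k t l \<alpha> n1 d1 k1 n2 d2 k2 \<longleftrightarrow>
     critical_data_set n d k \<alpha> n1 d1 k1 n2 d2 k2 \<and>
     real_of_int t / real_of_int k < \<alpha> \<and>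
     \<alpha> < real_of_int (l * n + t) / real_of_int k \<and>
     real_of_int d \<ge> (real_of_int n ^ 2 - 1) / real_of_int k - real_of_int (n - k) \<and>
     real_of_int d1 \<ge> (real_of_int n1 ^ 2 - 1) / real_of_int k1 - real_of_int (n1 - k1) \<and>
     ((k2 = 0 \<and> n2 = 1) \<or>
      (k2 \<ge> 1 \<and> real_of_int d2 \<ge> (real_of_int n2 ^ 2 - 1) / real_of_int k2 - real_of_int (n2 - k2)))"

definition C12 :: "int \<Rightarrow> int \<Rightarrow> int \<Rightarrow> int \<Rightarrow> int \<Rightarrow> int \<Rightarrow> int" where
  "C12 n1 d1 k1 n2 d2 k2 = - n1 * n2 - d2 * n1 + d1 * n2 + k1 * (d2 + n2 - k2)"

end

theory Submission
  imports Defs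
begin

text \<open>Write the integral form of the bound \<open>d \<ge> (n\<^sup>2 - 1)/k - (n - k)\<close> as
  \<open>n\<^sup>2 - 1 \<le> (d + n - k) k\<close>. Since \<open>n\<^sup>2 + k\<^sup>2 \<ge> 2nk\<close> it forces \<open>d k \<ge> n k - 1\<close>, hence
  \<open>d \<ge> n - 1\<close>, and \<open>d \<ge> n\<close> once \<open>k \<ge> 2\<close>; for \<open>k < n\<close> it forces \<open>d + n \<ge> 2k + 2\<close>.
  With \<open>C\<^sub>1\<^sub>2 = (k\<^sub>1 - n\<^sub>1)(d\<^sub>2 + n\<^sub>2) + d\<^sub>1 n\<^sub>2 - k\<^sub>1 k\<^sub>2\<close> and \<open>k\<^sub>2 < n\<^sub>2\<close> (from \<open>k < n\<close>) these
  bounds give \<open>C\<^sub>1\<^sub>2 > 0\<close>, except in the case \<open>(n\<^sub>1, d\<^sub>1, k\<^sub>1) = (1, 0, 1)\<close>. There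
  \<open>\<alpha>\<^sub>c = d/(n - k)\<close>, which is at least the upper end \<open>(l n + t)/k\<close> of the allowed
  interval because \<open>(l n + t)(n - k) = d k - n m\<close>.\<close>

lemma degree_bound_iff:
  fixes n d k :: int
  assumes "0 < k"
  shows "(real_of_int n ^ 2 - 1) / real_of_int k - real_of_int (n - k) \<le> real_of_int d
    \<longleftrightarrow> n\<^sup>2 - 1 \<le> (d + n - k) * k"
proof -
  have "(real_of_int n ^ 2 - 1) / real_of_int k - real_of_int (n - k) \<le> real_of_int d
    \<longleftrightarrow> (real_of_int n ^ 2 - 1) / real_of_int k \<le> real_of_int (d + n - k)"
    by auto
  also have "\<dots> \<longleftrightarrow> real_of_int n ^ 2 - 1 \<le> real_of_int (d + n - k) * real_of_int k"
    using assms by (simp add: pos_divide_le_eq)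
  also have "\<dots> \<longleftrightarrow> real_of_int (n\<^sup>2 - 1) \<le> real_of_int ((d + n - k) * k)"
    by simp
  also have "\<dots> \<longleftrightarrow> n\<^sup>2 - 1 \<le> (d + n - k) * k"
    by (rule of_int_le_iff)
  finally show ?thesis .
qed

lemma degree_bound_imp_mult_ge:
  fixes n d k :: int
  assumes "n\<^sup>2 - 1 \<le> (d + n - k) * k"
  shows "n * k - 1 \<le> d * k"
proof -
  have "0 \<le> (n - k)\<^sup>2" by simp
  then show ?thesis using assms by (simp add: power2_eq_square algebra_simps)
qed

lemma degree_bound_imp_ge_pred:
  fixes n d k :: int
  assumes "0 < k" and "n\<^sup>2 - 1 \<le> (d + n - k) * k"
  shows "n - 1 \<le> d"
proof -
  have "(n - 1) * k \<le> d * k"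
    using degree_bound_imp_mult_ge[OF assms(2)] assms(1) by (simp add: algebra_simps)
  then show ?thesis using assms(1) by simp
qed

lemma degree_bound_imp_ge:
  fixes n d k :: int
  assumes "2 \<le> k" and "n\<^sup>2 - 1 \<le> (d + n - k) * k"
  shows "n \<le> d"
proof -
  have "(n - 1) * k < d * k"
    using degree_bound_imp_mult_ge[OF assms(2)] assms(1) by (simp add: algebra_simps)
  then show ?thesis using assms(1) by (simp add: mult_less_cancel_right)
qed

lemma degree_bound_imp_add_ge:
  fixes n d k :: int
  assumes "1 \<le> k" and "k < n" and "n\<^sup>2 - 1 \<le> (d + n - k) * k"
  shows "2 * k + 2 \<le> d + n"
proof -
  have "(k + 1)\<^sup>2 \<le> n\<^sup>2" using assms(1,2) by (intro power_mono) auto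
  then have "(k + 2) * k \<le> (d + n - k) * k"
    using assms(3) by (simp add: power2_eq_square algebra_simps)
  then have "k + 2 \<le> d + n - k" using assms(1) by simp
  then show ?thesis by simp
qed

lemma type_params_slope_le:
  fixes n d k a t l m :: int
  assumes "0 < k" and "k < n" and "type_params n d k a t l m"
  shows "real_of_int (l * n + t) / real_of_int k \<le> real_of_int d / real_of_int (n - k)"
proof -
  have d: "d = n * a - t" and la: "l * (n - k) = k * a - t - m" and "0 \<le> m" "0 < n"
    using assms unfolding type_params_def by auto
  have "(l * n + t) * (n - k) = n * (l * (n - k)) + t * (n - k)" by (simp add: algebra_simps)
  also have "\<dots> = d * k - n * m" unfolding la d by (simp add: algebra_simps)
  also have "\<dots> \<le> d * k" using \<open>0 \<le> m\<close> \<open>0 < n\<close> by simp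
  finally have "real_of_int ((l * n + t) * (n - k)) \<le> real_of_int (d * k)"
    by (simp only: of_int_le_iff)
  then show ?thesis using assms(1,2) by (simp add: divide_simps)
qed

lemma allowable_not_1_0_1:
  fixes n d k a t l m n1 d1 k1 n2 d2 k2 :: int and \<alpha> :: real
  assumes "0 < k" and "k < n"
    and "type_params n d k a t l m"
    and "allowable n d k t l \<alpha> n1 d1 k1 n2 d2 k2"
  shows "\<not> (n1 = 1 \<and> d1 = 0 \<and> k1 = 1)"
proof
  assume "n1 = 1 \<and> d1 = 0 \<and> k1 = 1"
  with assms(4) have "\<alpha> = real_of_int d / real_of_int (n - k)"
    and "\<alpha> < real_of_int (l * n + t) / real_of_int k"
    unfolding allowable_def critical_data_set_def by (auto simp: algebra_simps)
  with type_params_slope_le[OF assms(1-3)] show False by simp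
qed

lemma C12_eq:
  "C12 n1 d1 k1 n2 d2 k2 = (k1 - n1) * (d2 + n2) + d1 * n2 - k1 * k2"
  unfolding C12_def by (simp add: algebra_simps)

lemma C12_pos_of_eq:
  fixes n1 d1 k1 n2 d2 k2 :: int
  assumes "k1 = n1" and "n1 \<le> d1" and "1 \<le> n1" and "0 \<le> k2" and "k2 < n2"
  shows "0 < C12 n1 d1 k1 n2 d2 k2"
proof -
  have "n1 * k2 < n1 * n2" using assms(3,5) by simp
  also have "\<dots> \<le> d1 * n2" using assms by (intro mult_right_mono) auto
  finally show ?thesis using assms(1) unfolding C12_eq by simp
qed

lemma C12_pos_of_gt:
  fixes n1 d1 k1 n2 d2 k2 :: int
  assumes "n1 < k1" and "n1 - 1 \<le> d1" and "2 * k2 + 2 \<le> d2 + n2"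
    and "1 \<le> n1" and "0 \<le> k2" and "k2 < n2"
  shows "0 < C12 n1 d1 k1 n2 d2 k2"
proof -
  have "0 \<le> (k1 - n1 - 1) * k2" using assms(1,5) by simp
  then have "0 < (k1 - n1 - 1) * k2 + (2 * k1 - n1 - 1)" using assms(1,4) by linarith
  also have "\<dots> = (k1 - n1) * (2 * k2 + 2) + (n1 - 1) * (k2 + 1) - k1 * k2"
    by (simp add: algebra_simps)
  also have "\<dots> \<le> (k1 - n1) * (d2 + n2) + d1 * n2 - k1 * k2"
  proof -
    have "(k1 - n1) * (2 * k2 + 2) \<le> (k1 - n1) * (d2 + n2)"
      using assms(1,3) by (intro mult_left_mono) auto
    moreover have "(n1 - 1) * (k2 + 1) \<le> d1 * n2"
      using assms by (intro mult_mono) auto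
    ultimately show ?thesis by simp
  qed
  finally show ?thesis unfolding C12_eq .
qed

theorem proposition5p3:
  fixes n d k a t l m n1 d1 k1 n2 d2 k2 :: int and \<alpha> :: real
  assumes "0 < k" and "k < n"
    and "type_params n d k a t l m"
    and "allowable n d k t l \<alpha> n1 d1 k1 n2 d2 k2"
    and "k1 \<ge> n1"
  shows "C12 n1 d1 k1 n2 d2 k2 > 0"
proof -
  note data = assms(4)[unfolded allowable_def critical_data_set_def]
  have "1 \<le> n1" and "0 \<le> k2" and "k2 < n2" and "0 < k1" using data assms(2,5) by auto
  have bound1: "n1\<^sup>2 - 1 \<le> (d1 + n1 - k1) * k1"
    using data degree_bound_iff[OF \<open>0 < k1\<close>] by blast
  show ?thesis
  proof (cases "k1 = n1")
    case True
    have "n1 \<le> d1"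
    proof (cases "2 \<le> k1")
      case True
      with bound1 show ?thesis using degree_bound_imp_ge by blast
    next
      case False
      with \<open>k1 = n1\<close> \<open>0 < k1\<close> have "n1 = 1" and "k1 = 1" by auto
      with degree_bound_imp_ge_pred[OF \<open>0 < k1\<close> bound1] allowable_not_1_0_1[OF assms(1-4)]
      show ?thesis by auto
    qed
    from True \<open>n1 \<le> d1\<close> \<open>1 \<le> n1\<close> \<open>0 \<le> k2\<close> \<open>k2 < n2\<close> show ?thesis by (rule C12_pos_of_eq)
  next
    case False
    \<comment> \<open>\<open>k\<^sub>2 = 0, n\<^sub>2 = 1\<close> together with \<open>k\<^sub>1 > n\<^sub>1\<close> would give \<open>k \<ge> n\<close>\<close>
    with data assms(2,5) have "1 \<le> k2" and "n2\<^sup>2 - 1 \<le> (d2 + n2 - k2) * k2"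
      using degree_bound_iff[of k2 n2 d2] by auto
    then have "2 * k2 + 2 \<le> d2 + n2" by (rule degree_bound_imp_add_ge[OF _ \<open>k2 < n2\<close>])
    moreover have "n1 < k1" using False assms(5) by simp
    ultimately show ?thesis
      using degree_bound_imp_ge_pred[OF \<open>0 < k1\<close> bound1] \<open>1 \<le> n1\<close> \<open>0 \<le> k2\<close> \<open>k2 < n2\<close>
      by (intro C12_pos_of_gt)
  qed
qed

end
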